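(* Let $\Delta$, $A$, $p$ and $V$ be as in the context. If there exists $S=\{s_1,\dots,s_n\}\subset\Gamma$ with $(s_i|s_j)=\langle\alpha_i,\alpha_j\rangle \pmod p$ for all $i,j$ (and $s_i\ne s_j$ for $i\ne j$ if $p=2$), and the rank $m$ of $V$ satisfies $m<n$, then $p$ divides $\det(A)$.
   Context: Let $\Delta\subset\mathbb{R}^n$ be a simply laced root system of full rank (so $\langle\beta,\beta\rangle=2$ for all roots), with simple roots $\alpha_1,\dots,\alpha_n$, and let $A$ be the $n\times n$ integer matrix $A_{ij}=\langle\alpha_i,\alpha_j\rangle$. Let $p\ge2$ be an integer, $V$ a free $\mathbb{Z}/p$-module of rank $m$ with a symmetric bilinear form $(\cdot|\cdot)$ with values in $\mathbb{Z}/p$, and $\Gamma=\{x\in V\setminus\{0\}:(x|x)=2\}$. *)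

theory Defs
  imports "HOL-Analysis.Analysis"
begin

definition refl_root :: "real^'n \<Rightarrow> real^'n \<Rightarrow> real^'n" where
  "refl_root a x = x - (2 * (x \<bullet> a) / (a \<bullet> a)) *\<^sub>R a"

definition root_system :: "(real^'n) set \<Rightarrow> bool" where
  "root_system D \<longleftrightarrow> finite D \<and> 0 \<notin> D \<and> span D = UNIV
     \<and> (\<forall>a\<in>D. \<forall>b\<in>D. refl_root a b \<in> D)
     \<and> (\<forall>a\<in>D. \<forall>b\<in>D. 2 * (b \<bullet> a) / (a \<bullet> a) \<in> \<int>)
     \<and> (\<forall>a\<in>D. \<forall>c::real. c *\<^sub>R a \<in> D \<longrightarrow> c = 1 \<or> c = -1)"

definition simply_laced_root_system :: "(real^'n) set \<Rightarrow> bool" where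
  "simply_laced_root_system D \<longleftrightarrow> root_system D \<and> (\<forall>b\<in>D. b \<bullet> b = 2)"

definition simple_roots :: "(real^'n) set \<Rightarrow> ('n \<Rightarrow> real^'n) \<Rightarrow> bool" where
  "simple_roots D al \<longleftrightarrow> inj al \<and> range al \<subseteq> D \<and> independent (range al)
     \<and> (\<forall>b\<in>D. \<exists>c :: 'n \<Rightarrow> int. b = (\<Sum>i\<in>UNIV. of_int (c i) *\<^sub>R al i)
              \<and> ((\<forall>i. c i \<ge> 0) \<or> (\<forall>i. c i \<le> 0)))"

text \<open>The free Z/p-module V of rank m, realised as (Z/p)^m: vectors are functions
  nat => int supported on {..<m} with entries in the residue system {0..<p}.
  A symmetric bilinear form with values in Z/p is given by a symmetric matrix B
  (entries taken mod p); its values are represented in {0..<p}.\<close>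

definition Vmod :: "int \<Rightarrow> nat \<Rightarrow> (nat \<Rightarrow> int) set" where
  "Vmod p m = {x. (\<forall>i<m. 0 \<le> x i \<and> x i < p) \<and> (\<forall>i\<ge>m. x i = 0)}"

definition bform :: "int \<Rightarrow> nat \<Rightarrow> (nat \<Rightarrow> nat \<Rightarrow> int) \<Rightarrow> (nat \<Rightarrow> int) \<Rightarrow> (nat \<Rightarrow> int) \<Rightarrow> int" where
  "bform p m B x y = (\<Sum>i<m. \<Sum>j<m. x i * B i j * y j) mod p"

definition Gamma :: "int \<Rightarrow> nat \<Rightarrow> (nat \<Rightarrow> nat \<Rightarrow> int) \<Rightarrow> (nat \<Rightarrow> int) set" where
  "Gamma p m B = {x \<in> Vmod p m. x \<noteq> (\<lambda>_. 0) \<and> bform p m B x x = 2 mod p}"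

end

theory Submission
  imports Defs "HOL-Number_Theory.Cong"
begin

text \<open>The Gram matrix of \<open>s\<^sub>1, \<dots>, s\<^sub>n\<close> under \<open>(\<cdot>|\<cdot>)\<close> factors, over the integers,
  through the coordinate space of rank \<open>m < n\<close>, so it is singular. Reducing modulo \<open>p\<close>,
  this Gram matrix is congruent entrywise to \<open>A\<close>, hence \<open>det A \<equiv> 0 (mod p)\<close>.\<close>

lemma det_cong:
  fixes A C :: "int^'n^'n"
  assumes "\<And>i j. [A $ i $ j = C $ i $ j] (mod p)"
  shows "[det A = det C] (mod p)"
  unfolding det_def by (intro cong_sum cong_scalar_left cong_prod assms)

lemma det_eq_0_if_column_eq_0:
  fixes A :: "'a::comm_ring_1^'n^'n"
  assumes "\<And>i. A $ i $ t = 0"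
  shows "det A = 0"
  unfolding det_def
proof (intro sum.neutral ballI)
  fix q assume "q \<in> {q. q permutes (UNIV :: 'n set)}"
  then have "q (inv q t) = t"
    by (simp add: permutes_inverses(1))
  then have "\<exists>i\<in>UNIV. A $ i $ q i = 0"
    using assms by (metis UNIV_I)
  then show "of_int (sign q) * (\<Prod>i\<in>UNIV. A $ i $ q i) = 0"
    by (simp add: prod_zero)
qed

lemma det_factor_through_lower_rank:
  fixes x :: "'n::finite \<Rightarrow> nat \<Rightarrow> 'a::comm_ring_1" and y :: "nat \<Rightarrow> 'n \<Rightarrow> 'a"
  assumes "m < CARD('n)"
  shows "det (\<chi> i j. \<Sum>k<m. x i k * y k j) = 0"
proof -
  obtain g where g: "bij_betw g (UNIV :: 'n set) {..<CARD('n)}"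
    using ex_bij_betw_finite_nat[of "UNIV :: 'n set"] by (auto simp: atLeast0LessThan)
  \<comment> \<open>Pad the \<open>n \<times> m\<close> factor with zero columns to a square matrix.\<close>
  define X :: "'a^'n^'n" where "X = (\<chi> i t. if g t < m then x i (g t) else 0)"
  define Y :: "'a^'n^'n" where "Y = (\<chi> t j. y (g t) j)"
  have "X ** Y = (\<chi> i j. \<Sum>k<m. x i k * y k j)"
  proof -
    have "(\<Sum>t\<in>UNIV. (if g t < m then x i (g t) else 0) * y (g t) j)
        = (\<Sum>k<CARD('n). (if k < m then x i k else 0) * y k j)" for i j
      using sum.reindex_bij_betw[OF g, of "\<lambda>k. (if k < m then x i k else 0) * y k j"] by simp
    also have "\<dots> i j = (\<Sum>k<m. x i k * y k j)" for i j
      by (rule sum.mono_neutral_cong_right) (use assms in auto)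
    finally show ?thesis
      by (simp add: vec_eq_iff matrix_matrix_mult_def X_def Y_def)
  qed
  moreover obtain t where "g t = m"
    using g assms unfolding bij_betw_def by (metis imageE lessThan_iff)
  then have "det X = 0"
    by (intro det_eq_0_if_column_eq_0[of X t]) (simp add: X_def)
  ultimately show ?thesis
    by (metis det_mul mult_zero_left)
qed

theorem mainTheorem4:
  fixes D :: "(real^'n) set" and al :: "'n \<Rightarrow> real^'n" and A :: "int^'n^'n"
    and p :: int and m :: nat and B :: "nat \<Rightarrow> nat \<Rightarrow> int" and s :: "'n \<Rightarrow> (nat \<Rightarrow> int)"
  assumes "simply_laced_root_system D"
    and "simple_roots D al"
    and "\<And>i j. real_of_int (A $ i $ j) = al i \<bullet> al j"
    and "p \<ge> 2"
    and "\<And>i j. i < m \<Longrightarrow> j < m \<Longrightarrow> B i j = B j i"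
    and "\<And>i. s i \<in> Gamma p m B"
    and gram: "\<And>i j. bform p m B (s i) (s j) = A $ i $ j mod p"
    and "p = 2 \<Longrightarrow> inj s"
    and rank: "m < CARD('n)"
  shows "p dvd det A"
proof -
  define G :: "int^'n^'n" where "G = (\<chi> i j. \<Sum>k<m. s i k * (\<Sum>l<m. B k l * s j l))"
  have "det G = 0"
    unfolding G_def using rank by (rule det_factor_through_lower_rank)
  moreover have "[det A = det G] (mod p)"
  proof (rule det_cong)
    show "[A $ i $ j = G $ i $ j] (mod p)" for i j
      using gram[of i j]
      by (simp add: G_def bform_def cong_def sum_distrib_left mult.assoc)
  qed
  ultimately show ?thesis
    by (simp add: cong_0_iff)
qed

end
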